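(* Suppose $|\mathit{Obs}|>1$. Then there is a CTL*KΔ formula $\varphi$ such that no CTL*K formula $\varphi'$ satisfies: for every model $M$, $M\models\varphi$ iff $M\models\varphi'$. That is, CTL*KΔ is not at most as expressive as CTL*K.
   Context: Fix a countably infinite set $\mathit{AP}$ of atomic propositions and a finite nonempty set $\mathit{Obs}$ of observations. For a word $w$ we write $w_i$ for its letter at position $i$ (positions start at $0$), $w_{\le i}$ for its prefix ending at position $i$, $|w|$ for the length of a finite word, and $\mathit{last}(w)$ for the last letter of a finite word; $w\preceq w'$ means $w$ is a prefix of $w'$. Syntax of CTL*KΔ (single agent): history formulas $\varphi::=p\mid\neg\varphi\mid\varphi\wedge\varphi\mid\mathbf A\psi\mid\mathbf K\varphi\mid\Delta^{o}\varphi$ and path formulas $\psi::=\varphi\mid\neg\psi\mid\psi\wedge\psi\mid\mathbf X\psi\mid\psi\,\mathbf U\,\psi$, with $p\in\mathit{AP}$ and $o\in\mathit{Obs}$; the formulas of the logic are the history formulas. CTL*K is the fragment of formulas containing no operator $\Delta^o$. A model is $M=(\mathit{AP}_f,S,T,V,\{\sim_o\}_{o\in\mathit{Obs}},s_\iota,o_\iota)$ where $\mathit{AP}_f\subseteq\mathit{AP}$ is finite, $S$ is a finite set of states, $T\subseteq S\times S$ is left-total, $V:S\to 2^{\mathit{AP}_f}$, each $\sim_o$ is an equivalence relation on $S$, $s_\iota\in S$ and $o_\iota\in\mathit{Obs}$. A path is an infinite sequence $\pi=s_0s_1\dots$ of states with $s_i\,T\,s_{i+1}$ for all $i$ (starting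 at any state); a history is a finite nonempty prefix of a path. An observation record is a finite word over $\mathit{Obs}\times\mathbb N$; $\epsilon$ is the empty record, $r\cdot(o,n)$ is $r$ with $(o,n)$ appended, and $r_{=n}$ is the subword of $r$ consisting of the pairs whose second component is $n$. The list $\mathit{ol}(r,n)$ is defined by $\mathit{ol}(r,0)=o_\iota\cdot o_1\cdots o_k$ if $r_{=0}=(o_1,0)\cdots(o_k,0)$, and $\mathit{ol}(r,n+1)=\mathit{last}(\mathit{ol}(r,n))\cdot o_1\cdots o_k$ if $r_{=n+1}=(o_1,n+1)\cdots(o_k,n+1)$. Two histories are equivalent, $h\approx_r h'$, if $|h|=|h'|$ and for every $i<|h|$ and every $o$ occurring in $\mathit{ol}(r,i)$, $h_i\sim_o h'_i$. Natural semantics: for a history $h$ and record $r$: $h,r\models p$ iff $p\in V(\mathit{last}(h))$; $h,r\models\neg\varphi$ iff not $h,r\models\varphi$; $h,r\models\varphi_1\wedge\varphi_2$ iff both hold; $h,r\models\mathbf A\psi$ iff for all paths $\pi$ with $h\preceq\pi$, $\pi,|h|-1,r\models\psi$; $h,r\models\mathbf K\varphi$ iff $h',r\models\varphi$ for all histories $h'$ with $h'\approx_r h$; $h,r\models\Delta^o\varphi$ iff $h,r\cdot(o,|h|-1)\models\varphi$. For a path $\pi$, $n\in\mathbb N$ and record $r$: $\pi,n,r\models\varphi$ iff $\pi_{\le n},r\models\varphi$; negation and conjunction as usual; $\pi,n,r\models\mathbf X\psi$ iff $\pi,n+1,r\models\psi$; $\pi,n,r\models\psi_1\mathbf U\psi_2$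 iff there is $m\ge n$ with $\pi,m,r\models\psi_2$ and $\pi,k,r\models\psi_1$ for all $n\le k<m$. A model $M$ satisfies $\varphi$, written $M\models\varphi$, iff $s_\iota,\epsilon\models\varphi$, where $s_\iota$ is viewed as a one-state history. *)

theory Defs
  imports Main
begin

text \<open>Atomic propositions: nat (countably infinite). States: nat (any finite
state set can be renamed into nat). Observations: a type variable 'o.\<close>

datatype 'o hform =
    Prop nat
  | HNot "'o hform"
  | HAnd "'o hform" "'o hform"
  | All "'o pform"
  | Know "'o hform"
  | Delta 'o "'o hform"
and 'o pform =
    PH "'o hform"
  | PNot "'o pform"
  | PAnd "'o pform" "'o pform"
  | Next "'o pform"
  | Until "'o pform" "'o pform"

primrec noDelta_h :: "'o hform \<Rightarrow> bool" and noDelta_p :: "'o pform \<Rightarrow> bool" where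
  "noDelta_h (Prop p) = True"
| "noDelta_h (HNot f) = noDelta_h f"
| "noDelta_h (HAnd f g) = (noDelta_h f \<and> noDelta_h g)"
| "noDelta_h (All q) = noDelta_p q"
| "noDelta_h (Know f) = noDelta_h f"
| "noDelta_h (Delta ob f) = False"
| "noDelta_p (PH f) = noDelta_h f"
| "noDelta_p (PNot q) = noDelta_p q"
| "noDelta_p (PAnd q r) = (noDelta_p q \<and> noDelta_p r)"
| "noDelta_p (Next q) = noDelta_p q"
| "noDelta_p (Until q r) = (noDelta_p q \<and> noDelta_p r)"

abbreviation ctlsk :: "'o hform \<Rightarrow> bool" where "ctlsk f \<equiv> noDelta_h f"

record 'o model =
  APf :: "nat set"
  St :: "nat set"
  Tr :: "(nat \<times> nat) set"
  Val :: "nat \<Rightarrow> nat set"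
  Sim :: "'o \<Rightarrow> (nat \<times> nat) set"
  sinit :: nat
  oinit :: 'o

definition wf_model :: "'o model \<Rightarrow> bool" where
  "wf_model M \<longleftrightarrow> finite (APf M) \<and> finite (St M) \<and> Tr M \<subseteq> St M \<times> St M
     \<and> (\<forall>s\<in>St M. \<exists>t. (s, t) \<in> Tr M)
     \<and> (\<forall>s\<in>St M. Val M s \<subseteq> APf M)
     \<and> (\<forall>ob. equiv (St M) (Sim M ob))
     \<and> sinit M \<in> St M"

definition is_path :: "'o model \<Rightarrow> (nat \<Rightarrow> nat) \<Rightarrow> bool" where
  "is_path M \<pi> \<longleftrightarrow> (\<forall>i. (\<pi> i, \<pi> (Suc i)) \<in> Tr M)"

definition hprefix :: "nat list \<Rightarrow> (nat \<Rightarrow> nat) \<Rightarrow> bool" where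
  "hprefix h \<pi> \<longleftrightarrow> (\<forall>i<length h. h ! i = \<pi> i)"

definition is_history :: "'o model \<Rightarrow> nat list \<Rightarrow> bool" where
  "is_history M h \<longleftrightarrow> h \<noteq> [] \<and> (\<exists>\<pi>. is_path M \<pi> \<and> hprefix h \<pi>)"

definition upto_pos :: "(nat \<Rightarrow> nat) \<Rightarrow> nat \<Rightarrow> nat list" where
  "upto_pos \<pi> n = map \<pi> [0..<Suc n]"

type_synonym 'o obsrec = "('o \<times> nat) list"

fun ol :: "'o model \<Rightarrow> 'o obsrec \<Rightarrow> nat \<Rightarrow> 'o list" where
  "ol M r 0 = oinit M # map fst (filter (\<lambda>p. snd p = 0) r)"
| "ol M r (Suc n) = last (ol M r n) # map fst (filter (\<lambda>p. snd p = Suc n) r)"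

definition hequiv :: "'o model \<Rightarrow> 'o obsrec \<Rightarrow> nat list \<Rightarrow> nat list \<Rightarrow> bool" where
  "hequiv M r h h' \<longleftrightarrow> length h = length h' \<and>
     (\<forall>i<length h. \<forall>ob\<in>set (ol M r i). (h ! i, h' ! i) \<in> Sim M ob)"

primrec hsat :: "'o model \<Rightarrow> nat list \<Rightarrow> 'o obsrec \<Rightarrow> 'o hform \<Rightarrow> bool"
and psat :: "'o model \<Rightarrow> (nat \<Rightarrow> nat) \<Rightarrow> nat \<Rightarrow> 'o obsrec \<Rightarrow> 'o pform \<Rightarrow> bool" where
  "hsat M h r (Prop p) = (p \<in> Val M (last h))"
| "hsat M h r (HNot f) = (\<not> hsat M h r f)"
| "hsat M h r (HAnd f g) = (hsat M h r f \<and> hsat M h r g)"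
| "hsat M h r (All q) = (\<forall>\<pi>. is_path M \<pi> \<and> hprefix h \<pi> \<longrightarrow> psat M \<pi> (length h - 1) r q)"
| "hsat M h r (Know f) = (\<forall>h'. is_history M h' \<and> hequiv M r h' h \<longrightarrow> hsat M h' r f)"
| "hsat M h r (Delta ob f) = hsat M h (r @ [(ob, length h - 1)]) f"
| "psat M \<pi> n r (PH f) = hsat M (upto_pos \<pi> n) r f"
| "psat M \<pi> n r (PNot q) = (\<not> psat M \<pi> n r q)"
| "psat M \<pi> n r (PAnd q q') = (psat M \<pi> n r q \<and> psat M \<pi> n r q')"
| "psat M \<pi> n r (Next q) = psat M \<pi> (Suc n) r q"
| "psat M \<pi> n r (Until q q') = (\<exists>m\<ge>n. psat M \<pi> m r q' \<and> (\<forall>k. n \<le> k \<and> k < m \<longrightarrow> psat M \<pi> k r q))"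

definition models :: "'o model \<Rightarrow> 'o hform \<Rightarrow> bool" where
  "models M f \<longleftrightarrow> hsat M [sinit M] [] f"

end

theory Submission
  imports Defs
begin

text \<open>Without \<open>\<Delta>\<close> the observation record stays empty, so a CTL*K formula only ever
consults the initial observation \<open>o\<^sub>\<iota>\<close>: two models that differ only in the
indistinguishability relation of another observation \<open>b\<close> satisfy the same CTL*K formulas.
Take two self-looping states, \<open>p\<close> true only in the initial one, indistinguishable under every
observation except \<open>b\<close>, which separates them in one of the two models. Then
\<open>\<Delta>\<^sup>b K p\<close> holds in that model and fails in the other.\<close>

lemma ol_Nil: "ol M [] i = [oinit M]"
  by (induction i) auto

lemma hequiv_Nil:
  "hequiv M [] h h' \<longleftrightarrow>
     length h = length h' \<and> (\<forall>i<length h. (h ! i, h' ! i) \<in> Sim M (oinit M))"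
  by (simp add: hequiv_def ol_Nil)

lemma noDelta_sat_cong:
  assumes Tr: "Tr M1 = Tr M2" and Val: "Val M1 = Val M2"
    and Sim: "Sim M1 (oinit M1) = Sim M2 (oinit M2)"
  shows "noDelta_h f \<Longrightarrow> hsat M1 h [] f = hsat M2 h [] f"
    and "noDelta_p q \<Longrightarrow> psat M1 \<pi> n [] q = psat M2 \<pi> n [] q"
proof -
  have path: "is_path M1 = is_path M2"
    using Tr by (simp add: is_path_def fun_eq_iff)
  have history: "is_history M1 = is_history M2"
    using path by (simp add: is_history_def fun_eq_iff)
  have equiv: "hequiv M1 [] = hequiv M2 []"
    using Sim by (simp add: hequiv_Nil fun_eq_iff)
  show "noDelta_h f \<Longrightarrow> hsat M1 h [] f = hsat M2 h [] f"
    and "noDelta_p q \<Longrightarrow> psat M1 \<pi> n [] q = psat M2 \<pi> n [] q"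
    by (induction f and q arbitrary: h and \<pi> n) (simp_all add: path history equiv Val)
qed

lemma models_noDelta_cong:
  assumes "Tr M1 = Tr M2" "Val M1 = Val M2" "sinit M1 = sinit M2"
    "Sim M1 (oinit M1) = Sim M2 (oinit M2)" and "ctlsk f"
  shows "models M1 f \<longleftrightarrow> models M2 f"
  using noDelta_sat_cong(1)[OF assms(1,2,4,5)] assms(3) by (simp add: models_def)

definition loop_model :: "('o \<Rightarrow> (nat \<times> nat) set) \<Rightarrow> 'o \<Rightarrow> 'o model" where
  "loop_model R o\<^sub>\<iota> = \<lparr>APf = {0}, St = {0, 1}, Tr = {(0, 0), (1, 1)},
     Val = (\<lambda>s. if s = 0 then {0} else {}), Sim = R, sinit = 0, oinit = o\<^sub>\<iota>\<rparr>"

lemma wf_loop_model: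
  assumes "\<And>ob. equiv {0, 1} (R ob)"
  shows "wf_model (loop_model R o\<^sub>\<iota>)"
  using assms by (auto simp: wf_model_def loop_model_def)

lemma is_history_loop_model_singleton:
  "is_history (loop_model R o\<^sub>\<iota>) [s] \<longleftrightarrow> s \<in> {0, 1}"
proof
  assume "is_history (loop_model R o\<^sub>\<iota>) [s]"
  then obtain \<pi> where "is_path (loop_model R o\<^sub>\<iota>) \<pi>" "\<pi> 0 = s"
    by (auto simp: is_history_def hprefix_def)
  then show "s \<in> {0, 1}"
    by (auto simp: is_path_def loop_model_def dest: spec[of _ 0])
next
  assume "s \<in> {0, 1}"
  then have "is_path (loop_model R o\<^sub>\<iota>) (\<lambda>_. s)"
    by (auto simp: is_path_def loop_model_def)
  then show "is_history (loop_model R o\<^sub>\<iota>) [s]"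
    by (auto simp: is_history_def hprefix_def)
qed

lemma models_loop_model_Delta_Know:
  "models (loop_model R o\<^sub>\<iota>) (Delta b (Know (Prop 0))) \<longleftrightarrow> (1, 0) \<notin> R o\<^sub>\<iota> \<inter> R b"
proof -
  define L where "L = loop_model R o\<^sub>\<iota>"
  have equiv_iff: "hequiv L [(b, 0)] h [0] \<longleftrightarrow> (\<exists>s. h = [s] \<and> (s, 0) \<in> R o\<^sub>\<iota> \<inter> R b)" for h
    by (cases h) (auto simp: hequiv_def L_def loop_model_def)
  have history_iff: "is_history L [s] \<longleftrightarrow> s \<in> {0, 1}" for s
    unfolding L_def by (rule is_history_loop_model_singleton)
  have val_iff: "0 \<in> Val L s \<longleftrightarrow> s = 0" for s
    by (simp add: L_def loop_model_def)
  have "models L (Delta b (Know (Prop 0))) \<longleftrightarrow>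
          (\<forall>h. is_history L h \<and> hequiv L [(b, 0)] h [0] \<longrightarrow> 0 \<in> Val L (last h))"
    by (simp add: models_def L_def loop_model_def)
  also have "\<dots> \<longleftrightarrow> (\<forall>s\<in>{0, 1}. (s, 0) \<in> R o\<^sub>\<iota> \<inter> R b \<longrightarrow> s = 0)"
    by (auto simp: equiv_iff history_iff val_iff dest: spec[of _ "[1]"])
  also have "\<dots> \<longleftrightarrow> (1, 0) \<notin> R o\<^sub>\<iota> \<inter> R b"
    by auto
  finally show ?thesis
    unfolding L_def .
qed

theorem mainTheorem9:
  assumes "card (UNIV :: 'o::finite set) > 1"
  shows "\<exists>\<phi> :: 'o hform. \<not> (\<exists>\<phi>'. ctlsk \<phi>' \<and>
           (\<forall>M :: 'o model. wf_model M \<longrightarrow> (models M \<phi> \<longleftrightarrow> models M \<phi>')))"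
proof -
  obtain a b :: 'o where "a \<noteq> b"
    using assms by (auto simp: card_le_Suc0_iff_eq simp flip: not_le)
  define S :: "nat set" where "S = {0, 1}"
  define M\<^sub>b :: "'o model" where "M\<^sub>b = loop_model (\<lambda>ob. if ob = b then Id_on S else S \<times> S) a"
  define M :: "'o model" where "M = loop_model (\<lambda>_. S \<times> S) a"
  have "equiv S (Id_on S)" "equiv S (S \<times> S)"
    by (auto simp: equiv_def refl_on_def sym_def trans_def)
  then have wf: "wf_model M\<^sub>b" "wf_model M"
    unfolding M\<^sub>b_def M_def S_def by (auto intro: wf_loop_model)
  let ?\<phi> = "Delta b (Know (Prop 0))"
  have "models M\<^sub>b ?\<phi>" "\<not> models M ?\<phi>"
    by (auto simp: M\<^sub>b_def M_def S_def models_loop_model_Delta_Know)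
  moreover have "models M\<^sub>b \<phi>' \<longleftrightarrow> models M \<phi>'" if "ctlsk \<phi>'" for \<phi>'
    using models_noDelta_cong[OF _ _ _ _ that] \<open>a \<noteq> b\<close>
    by (simp add: M\<^sub>b_def M_def loop_model_def)
  ultimately show ?thesis
    using wf by blast
qed

end
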